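(* Let $A$ be a finite alphabet, $n\ge1$, and $L\subseteq(A^\ast)^n$ a regular $n$-variable language. There is a positive integer $p$ such that for every $(w_1,\ldots,w_n)\in L$ with $N:=\max_i|w_i|\ge p$ the following holds. Let $w_i^\$=w_i\$^{N-|w_i|}$ (so each $w_i^\$$ has length $N$). Then there are integers $k\ge1$ and $l\ge 0$ with $k+l\le N$ such that, writing each $w_i^\$=u_im_iv_i$ where $m_i$ consists of the $k$-th through $(k+l)$-th letters of $w_i^\$$, for all $r\ge1$ the tuple $(u_1m_1^rv_1,\ldots,u_nm_n^rv_n)$, read as a word over the padded alphabet, lies in $L^\$$ (i.e. deleting the $\$$ symbols yields an element of $L$). Moreover, each $m_i$ consists either entirely of letters of $A$ or entirely of $\$$ symbols.
   Context: $A^\ast$ is the set of finite words over $A$, $\$$ a new padding symbol, $A^\$=(A\sqcup\{\$\})^n\setminus\{(\$,\ldots,\$)\}$ the padded alphabet. For $(w_1,\ldots,w_n)\in(A^\ast)^n$ with $N=\max|w_i|$, its padded string is the word $\overline\sigma_1\cdots\overline\sigma_N$ over $A^\$$ where $\overline\sigma_j$ is the $n$-tuple of $j$-th letters of the $w_i$, using $\$$ when $j>|w_i|$. $L^\$$ is the set of padded strings of elements of $L$. $L$ is regular ($n$-tape regular) if $L^\$$ is accepted by a deterministic finite state automaton over $A^\$$. *)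

theory Defs
  imports Main
begin

text \<open>Words are lists; an n-tuple of words is a list of n words.
  The padding symbol is None; a letter a of A is Some a.\<close>

definition padded_alphabet :: "'a set \<Rightarrow> nat \<Rightarrow> 'a option list set" where
  "padded_alphabet A n =
     {\<sigma>. length \<sigma> = n \<and> set \<sigma> \<subseteq> Some ` A \<union> {None} \<and> \<sigma> \<noteq> replicate n None}"

definition maxlen :: "'a list list \<Rightarrow> nat" where
  "maxlen ws = Max (insert 0 (set (map length ws)))"

definition pad_word :: "nat \<Rightarrow> 'a list \<Rightarrow> 'a option list" where
  "pad_word N w = map Some w @ replicate (N - length w) None"

text \<open>Reading a tuple of (equal length M) words over A \<union> {\$} as a word over
  the padded alphabet: the j-th letter is the tuple of the j-th letters.\<close>
definition columns :: "nat \<Rightarrow> 'a option list list \<Rightarrow> 'a option list list" where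
  "columns M ys = map (\<lambda>j. map (\<lambda>y. y ! j) ys) [0..<M]"

definition padded_string :: "'a list list \<Rightarrow> 'a option list list" where
  "padded_string ws = columns (maxlen ws) (map (pad_word (maxlen ws)) ws)"

definition padded_lang :: "'a list list set \<Rightarrow> 'a option list list set" where
  "padded_lang L = padded_string ` L"

definition dfa_accepted :: "'b set \<Rightarrow> 'b list set \<Rightarrow> bool" where
  "dfa_accepted \<Sigma> K \<longleftrightarrow>
     (\<exists>(Q::nat set) q0 (\<delta>::nat \<Rightarrow> 'b \<Rightarrow> nat) F.
        finite Q \<and> q0 \<in> Q \<and> (\<forall>q\<in>Q. \<forall>\<sigma>\<in>\<Sigma>. \<delta> q \<sigma> \<in> Q) \<and> F \<subseteq> Q \<and>
        K = {x. set x \<subseteq> \<Sigma> \<and> fold (\<lambda>\<sigma> q. \<delta> q \<sigma>) x q0 \<in> F})"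

definition regular_ntape :: "'a set \<Rightarrow> nat \<Rightarrow> 'a list list set \<Rightarrow> bool" where
  "regular_ntape A n L \<longleftrightarrow> dfa_accepted (padded_alphabet A n) (padded_lang L)"

end

theory Submission
  imports Defs
begin

text \<open>A DFA with m states has, inside every window of m letters of an accepted word, a factor
  that can be pumped, because among the m + 1 states visited along the window two coincide.
  Applied to the padded string of a tuple, this factor can be chosen inside a window avoiding
  the n lengths of the components: with N \<ge> (n + 1) m, some window of width m contains no
  component end in its interior, so on that window every padded component is either all
  letters or all padding. Pumping a column word is the same as pumping every row.\<close>

definition pump :: "nat \<Rightarrow> nat \<Rightarrow> nat \<Rightarrow> 'a list \<Rightarrow> 'a list" where
  "pump i j r xs = take i xs @ concat (replicate r (drop i (take j xs))) @ drop j xs"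

lemma length_pump:
  assumes "i \<le> j" "j \<le> length xs" "r \<ge> 1"
  shows "length (pump i j r xs) = length xs + (r - 1) * (j - i)"
proof -
  obtain s where r: "r = Suc s" using assms(3) by (cases r) auto
  obtain d e where "j = i + d" "length xs = j + e" using assms(1,2) le_Suc_ex by metis
  then show ?thesis
    by (simp add: pump_def r length_concat sum_list_replicate algebra_simps)
qed

lemma map_pump: "map f (pump i j r xs) = pump i j r (map f xs)"
  by (simp add: pump_def map_concat take_map drop_map)

lemma set_pump_subset: "set (pump i j r xs) \<subseteq> set xs"
  by (auto simp: pump_def dest!: in_set_takeD in_set_dropD)

lemma pump_eq_map_nth: "pump i j r xs = map ((!) xs) (pump i j r [0..<length xs])"
  by (simp add: map_pump map_nth)

text \<open>Every row of length N, and the column word itself, is the image of the index list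
  pump i j r [0..<N] under a fixed map.\<close>

lemma columns_map_pump:
  assumes "\<forall>y\<in>set ys. length y = N" "i \<le> j" "j \<le> N" "r \<ge> 1"
  shows "columns (N + (r - 1) * (j - i)) (map (pump i j r) ys) = pump i j r (columns N ys)"
proof -
  define P where "P = pump i j r [0..<N]"
  have len: "length P = N + (r - 1) * (j - i)"
    using assms by (simp add: P_def length_pump)
  have rows: "map (pump i j r) ys = map (\<lambda>y. map ((!) y) P) ys"
    using assms(1) by (auto simp: P_def intro: pump_eq_map_nth[THEN trans])
  have "columns (N + (r - 1) * (j - i)) (map (pump i j r) ys)
        = map (\<lambda>u. map (\<lambda>y. y ! u) ys) P"
    unfolding columns_def rows len[symmetric] by (rule nth_equalityI) auto
  also have "\<dots> = pump i j r (columns N ys)"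
    by (simp add: columns_def map_pump P_def)
  finally show ?thesis .
qed

lemma fold_concat_replicate_fixpoint:
  "fold f xs q = q \<Longrightarrow> fold f (concat (replicate r xs)) q = q"
  by (induction r) auto

lemma fold_pump:
  assumes "i \<le> j" "fold f (take i xs) q = fold f (take j xs) q"
  shows "fold f (pump i j r xs) q = fold f xs q"
proof -
  have "take j xs = take i xs @ drop i (take j xs)"
    using assms(1) by (metis append_take_drop_id min.absorb1 take_take)
  then have "fold f (drop i (take j xs)) (fold f (take i xs) q) = fold f (take i xs) q"
    using assms(2) by (metis comp_apply fold_append)
  then have "fold f (take i xs @ concat (replicate r (drop i (take j xs)))) q
             = fold f (take j xs) q"
    using assms(2) by (simp add: fold_concat_replicate_fixpoint)
  then show ?thesis
    by (metis append_take_drop_id comp_apply fold_append pump_def)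
qed

lemma fold_closed:
  assumes "\<forall>q\<in>Q. \<forall>\<sigma>\<in>S. \<delta> q \<sigma> \<in> Q" "set xs \<subseteq> S" "q \<in> Q"
  shows "fold (\<lambda>\<sigma> q. \<delta> q \<sigma>) xs q \<in> Q"
  using assms(2,3) by (induction xs arbitrary: q) (use assms(1) in auto)

lemma pigeonhole_interval:
  assumes "finite Q" "\<forall>t\<in>{a..a + card Q}. s t \<in> Q"
  obtains i j where "a \<le> i" "i < j" "j \<le> a + card Q" "s i = s j"
proof -
  have "\<not> inj_on s {a..a + card Q}"
  proof
    assume "inj_on s {a..a + card Q}"
    then have "card (s ` {a..a + card Q}) = card Q + 1" by (simp add: card_image)
    moreover have "card (s ` {a..a + card Q}) \<le> card Q"
      using assms by (intro card_mono) auto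
    ultimately show False by simp
  qed
  then obtain i j where "i \<in> {a..a + card Q}" "j \<in> {a..a + card Q}" "i \<noteq> j" "s i = s j"
    unfolding inj_on_def by blast
  then show ?thesis
    using that[of i j] that[of j i] by (cases "i < j") auto
qed

lemma dfa_pumping_window:
  assumes "dfa_accepted S K"
  obtains m :: nat where "m > 0"
    "\<And>x a. x \<in> K \<Longrightarrow> \<exists>i j. a \<le> i \<and> i < j \<and> j \<le> a + m \<and> (\<forall>r. pump i j r x \<in> K)"
proof -
  obtain Q :: "nat set" and q0 \<delta> F where Q: "finite Q" "q0 \<in> Q"
      and \<delta>: "\<forall>q\<in>Q. \<forall>\<sigma>\<in>S. \<delta> q \<sigma> \<in> Q"
      and K: "K = {x. set x \<subseteq> S \<and> fold (\<lambda>\<sigma> q. \<delta> q \<sigma>) x q0 \<in> F}"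
    using assms unfolding dfa_accepted_def by blast
  show ?thesis
  proof
    show "card Q > 0" using Q card_gt_0_iff by blast
  next
    fix x a assume x: "x \<in> K"
    define s where "s t = fold (\<lambda>\<sigma> q. \<delta> q \<sigma>) (take t x) q0" for t
    have "s t \<in> Q" for t
      unfolding s_def using x K Q(2)
      by (intro fold_closed[OF \<delta>]) (auto dest: in_set_takeD)
    then obtain i j where ij: "a \<le> i" "i < j" "j \<le> a + card Q" "s i = s j"
      using pigeonhole_interval[OF Q(1)] by blast
    have "pump i j r x \<in> K" for r
      using x ij set_pump_subset[of i j r x] fold_pump[of i j _ x q0 r]
      unfolding K s_def by auto
    then show "\<exists>i j. a \<le> i \<and> i < j \<and> j \<le> a + card Q \<and> (\<forall>r. pump i j r x \<in> K)"
      using ij by blast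
  qed
qed

lemma interval_avoiding_finite_set:
  assumes "finite B" "lo + (card B + 1) * m \<le> hi"
  shows "\<exists>a. lo \<le> a \<and> a + m \<le> hi \<and> (\<forall>b\<in>B. b \<le> a \<or> a + m \<le> b)"
  using assms
proof (induction "card B" arbitrary: B lo rule: less_induct)
  case less
  show ?case
  proof (cases "\<exists>b\<in>B. lo < b \<and> b < lo + m")
    case False
    then show ?thesis using less.prems(2) by (intro exI[of _ lo]) auto
  next
    case True
    then obtain b where b: "b \<in> B" "lo < b" "b < lo + m" by blast
    have card: "card B = card (B - {b}) + 1"
      using b less.prems(1) card_Suc_Diff1 by fastforce
    \<comment> \<open>the window must start beyond b; this costs at most m, one of the card B + 1 shares\<close>
    have "b + (card (B - {b}) + 1) * m \<le> hi"
      using less.prems(2) b(3) unfolding card by (simp add: algebra_simps)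
    then obtain a where "b \<le> a" "a + m \<le> hi" "\<forall>b'\<in>B - {b}. b' \<le> a \<or> a + m \<le> b'"
      using less.hyps[of "B - {b}"] card less.prems(1) by force
    then show ?thesis using b by (intro exI[of _ a]) auto
  qed
qed

lemma length_le_maxlen: "w \<in> set ws \<Longrightarrow> length w \<le> maxlen ws"
  by (auto simp: maxlen_def)

lemma pad_word_window_uniform:
  assumes "length w \<le> N" "j \<le> N" "length w \<le> i \<or> j \<le> length w"
  shows "(\<forall>u\<in>{i..<j}. pad_word N w ! u \<noteq> None) \<or> (\<forall>u\<in>{i..<j}. pad_word N w ! u = None)"
  using assms by (auto simp: pad_word_def nth_append)

lemma padded_string_pumping:
  fixes ws :: "'a list list"
  defines "N \<equiv> maxlen ws" and "wp \<equiv> map (pad_word (maxlen ws)) ws"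
  assumes pumping: "\<And>x a. x \<in> K \<Longrightarrow> \<exists>i j. a \<le> i \<and> i < j \<and> j \<le> a + m \<and> (\<forall>r. pump i j r x \<in> K)"
    and x: "padded_string ws \<in> K" and long: "(length ws + 1) * m \<le> N"
  obtains i j where "i < j" "j \<le> N"
    "\<And>r. r \<ge> 1 \<Longrightarrow> columns (N + (r - 1) * (j - i)) (map (pump i j r) wp) \<in> K"
    "\<forall>y\<in>set wp. (\<forall>u\<in>{i..<j}. y ! u \<noteq> None) \<or> (\<forall>u\<in>{i..<j}. y ! u = None)"
proof -
  have lw: "\<forall>w\<in>set ws. length w \<le> N"
    by (simp add: N_def length_le_maxlen)
  have lwp: "\<forall>y\<in>set wp. length y = N"
    using lw by (auto simp: wp_def N_def pad_word_def)
  have "card (length ` set ws) \<le> length ws"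
    using card_image_le[of "set ws" length] card_length[of ws] by simp
  then have "(card (length ` set ws) + 1) * m \<le> (length ws + 1) * m"
    by (intro mult_le_mono1) simp
  then have "0 + (card (length ` set ws) + 1) * m \<le> N"
    using long by linarith
  then obtain a where a: "a + m \<le> N" "\<forall>b\<in>length ` set ws. b \<le> a \<or> a + m \<le> b"
    using interval_avoiding_finite_set[of "length ` set ws" 0 m N] by blast
  then obtain i j where ij: "a \<le> i" "i < j" "j \<le> a + m"
      and pumped: "\<forall>r. pump i j r (columns N wp) \<in> K"
    using pumping[OF x[unfolded padded_string_def], of a]
    by (auto simp: columns_def N_def wp_def)
  show thesis
  proof
    show "i < j" "j \<le> N" using ij a by auto
    show "columns (N + (r - 1) * (j - i)) (map (pump i j r) wp) \<in> K" if "r \<ge> 1" for r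
      using pumped columns_map_pump[OF lwp _ _ that] ij a by simp
    show "\<forall>y\<in>set wp. (\<forall>u\<in>{i..<j}. y ! u \<noteq> None) \<or> (\<forall>u\<in>{i..<j}. y ! u = None)"
    proof
      fix y assume "y \<in> set wp"
      then obtain w where w: "w \<in> set ws" "y = pad_word N w" by (auto simp: wp_def N_def)
      then have "length w \<le> i \<or> j \<le> length w" using a ij by fastforce
      then show "(\<forall>u\<in>{i..<j}. y ! u \<noteq> None) \<or> (\<forall>u\<in>{i..<j}. y ! u = None)"
        unfolding w(2) using w(1) lw a ij by (intro pad_word_window_uniform) auto
    qed
  qed
qed

theorem mainTheorem8:
  fixes A :: "'a set" and n :: nat and L :: "'a list list set"
  assumes "finite A" and "n \<ge> 1"
    and "\<forall>ws\<in>L. length ws = n \<and> (\<forall>w\<in>set ws. set w \<subseteq> A)"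
    and "regular_ntape A n L"
  shows "\<exists>p::nat. p > 0 \<and>
    (\<forall>ws\<in>L. maxlen ws \<ge> p \<longrightarrow>
      (let N = maxlen ws; wp = map (pad_word N) ws in
       \<exists>k l::nat. k \<ge> 1 \<and> k + l \<le> N \<and>
         (\<forall>r::nat. r \<ge> 1 \<longrightarrow>
            columns (N + (r - 1) * (l + 1))
              (map (\<lambda>y. take (k - 1) y @ concat (replicate r (drop (k - 1) (take (k + l) y)))
                          @ drop (k + l) y) wp)
            \<in> padded_lang L) \<and>
         (\<forall>y\<in>set wp. (\<forall>j\<in>{k - 1..<k + l}. y ! j \<noteq> None) \<or>
                     (\<forall>j\<in>{k - 1..<k + l}. y ! j = None))))"
proof -
  obtain m where m: "m > 0" and pumping: "\<And>x a. x \<in> padded_lang L \<Longrightarrow>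
       \<exists>i j. a \<le> i \<and> i < j \<and> j \<le> a + m \<and> (\<forall>r. pump i j r x \<in> padded_lang L)"
    using assms(4) dfa_pumping_window unfolding regular_ntape_def by blast
  show ?thesis
  proof (intro exI[of _ "(n + 1) * m"] conjI ballI impI)
    show "(n + 1) * m > 0" using m by simp
    fix ws assume ws: "ws \<in> L" and long: "(n + 1) * m \<le> maxlen ws"
    obtain i j where ij: "i < j" "j \<le> maxlen ws"
      and "\<And>r. r \<ge> 1 \<Longrightarrow> columns (maxlen ws + (r - 1) * (j - i))
             (map (pump i j r) (map (pad_word (maxlen ws)) ws)) \<in> padded_lang L"
      and "\<forall>y\<in>set (map (pad_word (maxlen ws)) ws).
             (\<forall>u\<in>{i..<j}. y ! u \<noteq> None) \<or> (\<forall>u\<in>{i..<j}. y ! u = None)"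
      using padded_string_pumping[OF pumping] ws long assms(3)
      by (metis image_eqI padded_lang_def)
    moreover have shift: "i + 1 - 1 = i" "i + 1 + (j - i - 1) = j" "j - i - 1 + 1 = j - i"
      using ij by auto
    ultimately show "let N = maxlen ws; wp = map (pad_word N) ws in
       \<exists>k l::nat. k \<ge> 1 \<and> k + l \<le> N \<and>
         (\<forall>r::nat. r \<ge> 1 \<longrightarrow>
            columns (N + (r - 1) * (l + 1))
              (map (\<lambda>y. take (k - 1) y @ concat (replicate r (drop (k - 1) (take (k + l) y)))
                          @ drop (k + l) y) wp)
            \<in> padded_lang L) \<and>
         (\<forall>y\<in>set wp. (\<forall>j\<in>{k - 1..<k + l}. y ! j \<noteq> None) \<or>
                     (\<forall>j\<in>{k - 1..<k + l}. y ! j = None))"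
      unfolding Let_def pump_def[abs_def]
      by (intro exI[of _ "i + 1"] exI[of _ "j - i - 1"], unfold shift) auto
  qed
qed

end
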